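(* Let $G$ be a finite group acting cellularly on $K$, and hence on $\operatorname{Sec}(\pi^{\mathrm{sk}})$. Then the groupoid of $G$-equivariant Stokes cocycles on $K$ is canonically equivalent to the homotopy fixed point groupoid $\operatorname{Sec}(\pi^{\mathrm{sk}})^{hG}$.
   Context: Setting: $N^\circ$ is a regular punctured collar (walls removed) of the boundary over a reduced SNC divisor $D$ in a level-$n$ Kummer Kato–Nakayama space, with Stokes input (finite index set $\Phi$, graded local system $\mathrm{Gr}=\bigoplus_{q\in\Phi}\mathrm{Gr}_q$, locally constant preorders) and Stokes sheaf $\mathrm{St}_\Phi$ (automorphisms of $\mathrm{Gr}$ preserving the standard filtrations $\bigoplus_{q'\preceq q}\mathrm{Gr}_{q'}$ and inducing the identity on graded pieces). $\Sigma_{D,\Phi,n}$ is the common refinement of the SNC-depth and Stokes-wall stratifications of $N^\circ$; on each stratum $S$, $\mathrm{St}_\Phi$ is locally constant, and $\mathrm{St}_\Phi(S)$ denotes its group of sections over a contractible open of $S$. $K$ is a locally finite CW decomposition of $N^\circ$ adapted to $\Sigma_{D,\Phi,n}$ (every open cell lies in a unique stratum; $S(c)$ is the stratum of a cell $c$). $\Pi_1^{\mathrm{sk}}(K)$ is the groupoid on the vertices generated by oriented $1$-cells (with inverses) subject to the relations from $2$-cells. $\mathcal G_C^{\mathrm{sk}}$ has the same objects and is generated by $(e,u)$, $e$ an oriented edge, $u\in\mathrm{St}_\Phi(S(e))$, with labels multiplying along compositions and $2$-cell relations; $\pi^{\mathrm{sk}}:\mathcal G_C^{\mathrm{sk}}\to\Pi_1^{\mathrm{sk}}(K)$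 forgets labels. A strict section of $\pi^{\mathrm{sk}}$ is equivalently a choice of labels $u_e\in\mathrm{St}_\Phi(S(e))$ on oriented $1$-cells satisfying the $2$-cell relations, and natural isomorphisms are vertex gauges; $\operatorname{Sec}(\pi^{\mathrm{sk}})$ is the groupoid of these. $G$ acts on $K$ by cellular maps and on the Stokes data by pullback, writing $g(u)$ for the transported element. A $G$-equivariant Stokes cocycle on $K$ is a cocycle $(u_e)$ for $\pi^{\mathrm{sk}}$ together with elements $a_g(v)\in\mathrm{St}_\Phi(S(v))$ for every $g\in G$ and vertex $v$ such that $u_{g\cdot e}=a_g(w)\,g(u_e)\,a_g(v)^{-1}$ for every oriented $1$-cell $e:v\to w$ and $g\in G$, and $a_{gh}(v)=a_g(v)\,g(a_h(v))$ for all $g,h$ and vertices $v$; morphisms are vertex gauges $h(v)\in\mathrm{St}_\Phi(S(v))$ transforming $(u_e,a_g(v))$ into $(u'_e,a'_g(v))$ by the usual conjugation. For a finite group $G$ acting on a groupoid $\mathcal C$ by strict autoequivalences, $\mathcal C^{hG}$ is the groupoid of objects $x$ with isomorphisms $\varphi_g:g\cdot x\to x$ such that $\varphi_1=\mathrm{id}$, $\varphi_{gh}=\varphi_g\circ g(\varphi_h)$, with morphisms $f$ satisfying $f\varphi_g=\varphi'_g g(f)$. *)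

theory Defs
  imports "HOL-Algebra.Group" "HOL-Algebra.Coset"
begin

text \<open>The 2-cells are recorded through their boundary loops (lists of oriented edges).
  All Stokes groups St(S(c)) are modelled as subgroups of one ambient group amb,
  in which the products appearing in the cocycle formulas are taken.\<close>

record ('v, 'e, 'a) stokes_skel =
  amb    :: "'a monoid"
  src    :: "'e \<Rightarrow> 'v"
  tgt    :: "'e \<Rightarrow> 'v"
  opp    :: "'e \<Rightarrow> 'e"
  cells2 :: "'e list set"
  StV    :: "'v \<Rightarrow> 'a set"
  StE    :: "'e \<Rightarrow> 'a set"

definition closed_path :: "('v, 'e, 'a) stokes_skel \<Rightarrow> 'e list \<Rightarrow> bool" where
  "closed_path K l \<longleftrightarrow> l \<noteq> [] \<and>
     (\<forall>i. Suc i < length l \<longrightarrow> tgt K (l ! i) = src K (l ! Suc i)) \<and>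
     tgt K (last l) = src K (hd l)"

definition skel_wf :: "('v, 'e, 'a) stokes_skel \<Rightarrow> bool" where
  "skel_wf K \<longleftrightarrow> group (amb K) \<and>
     (\<forall>v. subgroup (StV K v) (amb K)) \<and>
     (\<forall>e. subgroup (StE K e) (amb K)) \<and>
     (\<forall>e. src K (opp K e) = tgt K e \<and> tgt K (opp K e) = src K e \<and>
          opp K (opp K e) = e \<and> opp K e \<noteq> e \<and> StE K (opp K e) = StE K e) \<and>
     (\<forall>l \<in> cells2 K. closed_path K l)"

text \<open>Label of a path e1,...,en (composition e1 first): u(en) * ... * u(e1).\<close>
fun path_label :: "('v, 'e, 'a) stokes_skel \<Rightarrow> ('e \<Rightarrow> 'a) \<Rightarrow> 'e list \<Rightarrow> 'a" where
  "path_label K u [] = \<one>\<^bsub>amb K\<^esub>"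
| "path_label K u (e # es) = path_label K u es \<otimes>\<^bsub>amb K\<^esub> u e"

text \<open>Objects of Sec(pi^sk): strict sections = labels on oriented 1-cells
  satisfying the 2-cell relations.\<close>
definition sk_cocycle :: "('v, 'e, 'a) stokes_skel \<Rightarrow> ('e \<Rightarrow> 'a) \<Rightarrow> bool" where
  "sk_cocycle K u \<longleftrightarrow> (\<forall>e. u e \<in> StE K e) \<and>
     (\<forall>e. u (opp K e) = inv\<^bsub>amb K\<^esub> (u e)) \<and>
     (\<forall>l \<in> cells2 K. path_label K u l = \<one>\<^bsub>amb K\<^esub>)"

definition gauge :: "('v, 'e, 'a) stokes_skel \<Rightarrow> ('v \<Rightarrow> 'a) \<Rightarrow> bool" where
  "gauge K h \<longleftrightarrow> (\<forall>v. h v \<in> StV K v)"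

definition gauge_transforms :: "('v, 'e, 'a) stokes_skel \<Rightarrow> ('v \<Rightarrow> 'a) \<Rightarrow> ('e \<Rightarrow> 'a) \<Rightarrow> ('e \<Rightarrow> 'a) \<Rightarrow> bool" where
  "gauge_transforms K h u u' \<longleftrightarrow>
     (\<forall>e. u' e = h (tgt K e) \<otimes>\<^bsub>amb K\<^esub> u e \<otimes>\<^bsub>amb K\<^esub> inv\<^bsub>amb K\<^esub> (h (src K e)))"

text \<open>Morphisms of Sec(pi^sk): vertex gauges.\<close>
definition sec_hom :: "('v, 'e, 'a) stokes_skel \<Rightarrow> ('e \<Rightarrow> 'a) \<Rightarrow> ('e \<Rightarrow> 'a) \<Rightarrow> ('v \<Rightarrow> 'a) set" where
  "sec_hom K u u' = {h. gauge K h \<and> gauge_transforms K h u u'}"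

text \<open>Composition: first h, then h'.\<close>
definition gauge_comp :: "('v, 'e, 'a) stokes_skel \<Rightarrow> ('v \<Rightarrow> 'a) \<Rightarrow> ('v \<Rightarrow> 'a) \<Rightarrow> ('v \<Rightarrow> 'a)" where
  "gauge_comp K h' h = (\<lambda>v. h' v \<otimes>\<^bsub>amb K\<^esub> h v)"

definition gauge_id :: "('v, 'e, 'a) stokes_skel \<Rightarrow> ('v \<Rightarrow> 'a)" where
  "gauge_id K = (\<lambda>v. \<one>\<^bsub>amb K\<^esub>)"

record ('g, 'v, 'e, 'a) skel_action =
  actV :: "'g \<Rightarrow> 'v \<Rightarrow> 'v"
  actE :: "'g \<Rightarrow> 'e \<Rightarrow> 'e"
  actA :: "'g \<Rightarrow> 'a \<Rightarrow> 'a"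

text \<open>Two boundary loops describe the same 2-cell relation if they agree up to
  rotation (choice of base point) and reversal of orientation.\<close>
definition same_loop :: "('v, 'e, 'a) stokes_skel \<Rightarrow> 'e list \<Rightarrow> 'e list \<Rightarrow> bool" where
  "same_loop K l l' \<longleftrightarrow> (\<exists>n. l = rotate n l' \<or> l = rotate n (map (opp K) (rev l')))"

definition action_wf :: "('g, 'c) monoid_scheme \<Rightarrow> ('v, 'e, 'a) stokes_skel \<Rightarrow> ('g, 'v, 'e, 'a) skel_action \<Rightarrow> bool" where
  "action_wf G K \<alpha> \<longleftrightarrow> group G \<and> finite (carrier G) \<and>
     actV \<alpha> \<one>\<^bsub>G\<^esub> = id \<and> actE \<alpha> \<one>\<^bsub>G\<^esub> = id \<and>
     (\<forall>x \<in> carrier (amb K). actA \<alpha> \<one>\<^bsub>G\<^esub> x = x) \<and>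
     (\<forall>g \<in> carrier G. \<forall>h \<in> carrier G.
        actV \<alpha> (g \<otimes>\<^bsub>G\<^esub> h) = actV \<alpha> g \<circ> actV \<alpha> h \<and>
        actE \<alpha> (g \<otimes>\<^bsub>G\<^esub> h) = actE \<alpha> g \<circ> actE \<alpha> h \<and>
        (\<forall>x \<in> carrier (amb K). actA \<alpha> (g \<otimes>\<^bsub>G\<^esub> h) x = actA \<alpha> g (actA \<alpha> h x))) \<and>
     (\<forall>g \<in> carrier G.
        actA \<alpha> g \<in> hom (amb K) (amb K) \<and>
        (\<forall>v. actA \<alpha> g ` StV K v \<subseteq> StV K (actV \<alpha> g v)) \<and>
        (\<forall>e. actA \<alpha> g ` StE K e \<subseteq> StE K (actE \<alpha> g e)) \<and>
        (\<forall>e. src K (actE \<alpha> g e) = actV \<alpha> g (src K e) \<and>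
             tgt K (actE \<alpha> g e) = actV \<alpha> g (tgt K e) \<and>
             opp K (actE \<alpha> g e) = actE \<alpha> g (opp K e)) \<and>
        (\<forall>l \<in> cells2 K. \<exists>l' \<in> cells2 K. same_loop K (map (actE \<alpha> g) l) l'))"

definition act_sec :: "('g, 'c) monoid_scheme \<Rightarrow> ('g, 'v, 'e, 'a) skel_action \<Rightarrow> 'g \<Rightarrow> ('e \<Rightarrow> 'a) \<Rightarrow> ('e \<Rightarrow> 'a)" where
  "act_sec G \<alpha> g u = (\<lambda>e. actA \<alpha> g (u (actE \<alpha> (inv\<^bsub>G\<^esub> g) e)))"

definition act_gauge :: "('g, 'c) monoid_scheme \<Rightarrow> ('g, 'v, 'e, 'a) skel_action \<Rightarrow> 'g \<Rightarrow> ('v \<Rightarrow> 'a) \<Rightarrow> ('v \<Rightarrow> 'a)" where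
  "act_gauge G \<alpha> g h = (\<lambda>v. actA \<alpha> g (h (actV \<alpha> (inv\<^bsub>G\<^esub> g) v)))"

definition eq_cocycle :: "('g, 'c) monoid_scheme \<Rightarrow> ('v, 'e, 'a) stokes_skel \<Rightarrow> ('g, 'v, 'e, 'a) skel_action
    \<Rightarrow> ('e \<Rightarrow> 'a) \<times> ('g \<Rightarrow> 'v \<Rightarrow> 'a) \<Rightarrow> bool" where
  "eq_cocycle G K \<alpha> ua \<longleftrightarrow> (case ua of (u, a) \<Rightarrow>
     sk_cocycle K u \<and>
     (\<forall>g \<in> carrier G. \<forall>v. a g v \<in> StV K (actV \<alpha> g v)) \<and>
     (\<forall>g \<in> carrier G. \<forall>e. u (actE \<alpha> g e) =
         a g (tgt K e) \<otimes>\<^bsub>amb K\<^esub> actA \<alpha> g (u e) \<otimes>\<^bsub>amb K\<^esub> inv\<^bsub>amb K\<^esub> (a g (src K e))) \<and>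
     (\<forall>g \<in> carrier G. \<forall>h \<in> carrier G. \<forall>v.
         a (g \<otimes>\<^bsub>G\<^esub> h) v = a g (actV \<alpha> h v) \<otimes>\<^bsub>amb K\<^esub> actA \<alpha> g (a h v)) \<and>
     (\<forall>g. g \<notin> carrier G \<longrightarrow> a g = (\<lambda>v. \<one>\<^bsub>amb K\<^esub>)))"

definition eq_cocycle_hom :: "('g, 'c) monoid_scheme \<Rightarrow> ('v, 'e, 'a) stokes_skel \<Rightarrow> ('g, 'v, 'e, 'a) skel_action
    \<Rightarrow> ('e \<Rightarrow> 'a) \<times> ('g \<Rightarrow> 'v \<Rightarrow> 'a) \<Rightarrow> ('e \<Rightarrow> 'a) \<times> ('g \<Rightarrow> 'v \<Rightarrow> 'a) \<Rightarrow> ('v \<Rightarrow> 'a) set" where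
  "eq_cocycle_hom G K \<alpha> ua ua' = {h. gauge K h \<and> gauge_transforms K h (fst ua) (fst ua') \<and>
     (\<forall>g \<in> carrier G. \<forall>v. snd ua' g v =
        h (actV \<alpha> g v) \<otimes>\<^bsub>amb K\<^esub> snd ua g v \<otimes>\<^bsub>amb K\<^esub> inv\<^bsub>amb K\<^esub> (actA \<alpha> g (h v)))}"

definition hfix_obj :: "('g, 'c) monoid_scheme \<Rightarrow> ('v, 'e, 'a) stokes_skel \<Rightarrow> ('g, 'v, 'e, 'a) skel_action
    \<Rightarrow> ('e \<Rightarrow> 'a) \<times> ('g \<Rightarrow> 'v \<Rightarrow> 'a) \<Rightarrow> bool" where
  "hfix_obj G K \<alpha> x\<phi> \<longleftrightarrow> (case x\<phi> of (x, \<phi>) \<Rightarrow>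
     sk_cocycle K x \<and>
     (\<forall>g \<in> carrier G. \<phi> g \<in> sec_hom K (act_sec G \<alpha> g x) x) \<and>
     \<phi> \<one>\<^bsub>G\<^esub> = gauge_id K \<and>
     (\<forall>g \<in> carrier G. \<forall>h \<in> carrier G.
        \<phi> (g \<otimes>\<^bsub>G\<^esub> h) = gauge_comp K (\<phi> g) (act_gauge G \<alpha> g (\<phi> h))) \<and>
     (\<forall>g. g \<notin> carrier G \<longrightarrow> \<phi> g = gauge_id K))"

definition hfix_hom :: "('g, 'c) monoid_scheme \<Rightarrow> ('v, 'e, 'a) stokes_skel \<Rightarrow> ('g, 'v, 'e, 'a) skel_action
    \<Rightarrow> ('e \<Rightarrow> 'a) \<times> ('g \<Rightarrow> 'v \<Rightarrow> 'a) \<Rightarrow> ('e \<Rightarrow> 'a) \<times> ('g \<Rightarrow> 'v \<Rightarrow> 'a) \<Rightarrow> ('v \<Rightarrow> 'a) set" where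
  "hfix_hom G K \<alpha> x\<phi> x\<phi>' = {f. f \<in> sec_hom K (fst x\<phi>) (fst x\<phi>') \<and>
     (\<forall>g \<in> carrier G. gauge_comp K f (snd x\<phi> g) =
                        gauge_comp K (snd x\<phi>' g) (act_gauge G \<alpha> g f))}"

text \<open>A functor F between categories given by object sets, hom sets, composition
  (comp g f = "g after f") and identities, which is fully faithful and essentially surjective.\<close>
definition cat_equivalent ::
  "'o1 set \<Rightarrow> ('o1 \<Rightarrow> 'o1 \<Rightarrow> 'm1 set) \<Rightarrow> ('m1 \<Rightarrow> 'm1 \<Rightarrow> 'm1) \<Rightarrow> ('o1 \<Rightarrow> 'm1)
   \<Rightarrow> 'o2 set \<Rightarrow> ('o2 \<Rightarrow> 'o2 \<Rightarrow> 'm2 set) \<Rightarrow> ('m2 \<Rightarrow> 'm2 \<Rightarrow> 'm2) \<Rightarrow> ('o2 \<Rightarrow> 'm2) \<Rightarrow> bool" where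
  "cat_equivalent O1 H1 C1 I1 O2 H2 C2 I2 \<longleftrightarrow>
    (\<exists>Fo Fm.
       (\<forall>x \<in> O1. Fo x \<in> O2) \<and>
       (\<forall>x \<in> O1. \<forall>y \<in> O1. bij_betw (Fm x y) (H1 x y) (H2 (Fo x) (Fo y))) \<and>
       (\<forall>x \<in> O1. Fm x x (I1 x) = I2 (Fo x)) \<and>
       (\<forall>x \<in> O1. \<forall>y \<in> O1. \<forall>z \<in> O1. \<forall>f \<in> H1 x y. \<forall>g \<in> H1 y z.
           Fm x z (C1 g f) = C2 (Fm y z g) (Fm x y f)) \<and>
       (\<forall>z \<in> O2. \<exists>x \<in> O1. \<exists>f \<in> H2 (Fo x) z. \<exists>f' \<in> H2 z (Fo x).
           C2 f' f = I2 (Fo x) \<and> C2 f f' = I2 z))"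

end

theory Submission
  imports Defs
begin

text \<open>An equivariance datum \<open>a\<^sub>g(v) \<in> St(S(g v))\<close> is the same thing as the vertex gauge
  \<open>\<phi>\<^sub>g(w) = a\<^sub>g(g\<^sup>-\<^sup>1 w)\<close> from \<open>g\<cdot>u\<close> to \<open>u\<close>. Under this reindexing the edge condition
  on \<open>u\<^sub>g\<^sub>e\<close> becomes the gauge-transformation condition, the cocycle identity for \<open>a\<close>
  becomes \<open>\<phi>\<^sub>g\<^sub>h = \<phi>\<^sub>g \<circ> g(\<phi>\<^sub>h)\<close>, and the two conditions on morphisms coincide. The
  normalisation \<open>\<phi>\<^sub>1 = id\<close> is automatic, being the cocycle identity at \<open>g = h = 1\<close>.
  Hence the reindexing is an isomorphism of groupoids which is the identity on gauges.\<close>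

lemma cat_equivalentI_identity_on_homs:
  assumes obj: "\<And>x. x \<in> O1 \<Longrightarrow> Fo x \<in> O2"
    and homs: "\<And>x y. x \<in> O1 \<Longrightarrow> y \<in> O1 \<Longrightarrow> H1 x y = H2 (Fo x) (Fo y)"
    and ids: "\<And>x. x \<in> O1 \<Longrightarrow> I1 x = I2 (Fo x)"
    and surj: "O2 \<subseteq> Fo ` O1"
    and id_hom: "\<And>z. z \<in> O2 \<Longrightarrow> I2 z \<in> H2 z z"
    and id_comp: "\<And>z. z \<in> O2 \<Longrightarrow> C (I2 z) (I2 z) = I2 z"
  shows "cat_equivalent O1 H1 C I1 O2 H2 C I2"
  unfolding cat_equivalent_def
proof (intro exI[of _ Fo] exI[of _ "\<lambda>x y f. f"] conjI ballI)
  show "\<exists>x \<in> O1. \<exists>f \<in> H2 (Fo x) z. \<exists>f' \<in> H2 z (Fo x). C f' f = I2 (Fo x) \<and> C f f' = I2 z"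
    if "z \<in> O2" for z
    using that surj id_hom id_comp by blast
qed (simp_all add: obj homs ids bij_betw_def)

lemma (in group) action_inv_cancel:
  assumes unit: "f \<one> = id"
    and mult: "\<forall>g \<in> carrier G. \<forall>h \<in> carrier G. f (g \<otimes> h) = f g \<circ> f h"
    and g: "g \<in> carrier G"
  shows "f g (f (inv g) x) = x" and "f (inv g) (f g x) = x"
  using mult unit g by (metis comp_apply id_apply inv_closed l_inv r_inv)+

definition hfix_of_cocycle :: "('g, 'c) monoid_scheme \<Rightarrow> ('g, 'v, 'e, 'a) skel_action
    \<Rightarrow> ('e \<Rightarrow> 'a) \<times> ('g \<Rightarrow> 'v \<Rightarrow> 'a) \<Rightarrow> ('e \<Rightarrow> 'a) \<times> ('g \<Rightarrow> 'v \<Rightarrow> 'a)" where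
  "hfix_of_cocycle G \<alpha> ua = (fst ua, \<lambda>g v. snd ua g (actV \<alpha> (inv\<^bsub>G\<^esub> g) v))"

text \<open>No case distinction on \<open>g \<in> carrier G\<close> is needed: \<^const>\<open>hfix_obj\<close> forces
  \<open>\<phi>\<^sub>g = id\<close> off the carrier, which is the normalisation required by \<^const>\<open>eq_cocycle\<close>.\<close>

definition cocycle_of_hfix :: "('g, 'v, 'e, 'a) skel_action
    \<Rightarrow> ('e \<Rightarrow> 'a) \<times> ('g \<Rightarrow> 'v \<Rightarrow> 'a) \<Rightarrow> ('e \<Rightarrow> 'a) \<times> ('g \<Rightarrow> 'v \<Rightarrow> 'a)" where
  "cocycle_of_hfix \<alpha> x\<phi> = (fst x\<phi>, \<lambda>g v. snd x\<phi> g (actV \<alpha> g v))"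

locale stokes_action =
  fixes G :: "('g, 'c) monoid_scheme"
    and K :: "('v, 'e, 'a) stokes_skel"
    and \<alpha> :: "('g, 'v, 'e, 'a) skel_action"
  assumes skel_wf: "skel_wf K"
    and action_wf: "action_wf G K \<alpha>"
begin

sublocale G: group G
  using action_wf by (simp add: action_wf_def)

sublocale St: group "amb K"
  using skel_wf by (simp add: skel_wf_def)

lemma StV_carrier: "x \<in> StV K v \<Longrightarrow> x \<in> carrier (amb K)"
  using skel_wf unfolding skel_wf_def by (meson subgroup.mem_carrier)

lemma StE_carrier: "x \<in> StE K e \<Longrightarrow> x \<in> carrier (amb K)"
  using skel_wf unfolding skel_wf_def by (meson subgroup.mem_carrier)

lemma one_StV: "\<one>\<^bsub>amb K\<^esub> \<in> StV K v"
  using skel_wf unfolding skel_wf_def by (meson subgroup.one_closed)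

lemma actA_hom: "g \<in> carrier G \<Longrightarrow> actA \<alpha> g \<in> hom (amb K) (amb K)"
  using action_wf by (simp add: action_wf_def)

lemma actA_closed: "g \<in> carrier G \<Longrightarrow> x \<in> carrier (amb K) \<Longrightarrow> actA \<alpha> g x \<in> carrier (amb K)"
  by (rule hom_in_carrier[OF actA_hom])

lemma actA_one: "g \<in> carrier G \<Longrightarrow> actA \<alpha> g \<one>\<^bsub>amb K\<^esub> = \<one>\<^bsub>amb K\<^esub>"
  by (rule hom_one[OF actA_hom St.group_axioms St.group_axioms])

lemma actA_unit: "x \<in> carrier (amb K) \<Longrightarrow> actA \<alpha> \<one>\<^bsub>G\<^esub> x = x"
  using action_wf by (simp add: action_wf_def)

lemma actV_unit: "actV \<alpha> \<one>\<^bsub>G\<^esub> v = v"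
  using action_wf by (simp add: action_wf_def)

lemma actV_mult:
  "g \<in> carrier G \<Longrightarrow> h \<in> carrier G \<Longrightarrow> actV \<alpha> (g \<otimes>\<^bsub>G\<^esub> h) v = actV \<alpha> g (actV \<alpha> h v)"
  using action_wf by (simp add: action_wf_def)

lemma actV_inv_cancel:
  assumes "g \<in> carrier G"
  shows "actV \<alpha> g (actV \<alpha> (inv\<^bsub>G\<^esub> g) v) = v" and "actV \<alpha> (inv\<^bsub>G\<^esub> g) (actV \<alpha> g v) = v"
  using action_wf assms unfolding action_wf_def by (auto intro: G.action_inv_cancel)

lemma actE_inv_cancel:
  assumes "g \<in> carrier G"
  shows "actE \<alpha> g (actE \<alpha> (inv\<^bsub>G\<^esub> g) e) = e" and "actE \<alpha> (inv\<^bsub>G\<^esub> g) (actE \<alpha> g e) = e"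
  using action_wf assms unfolding action_wf_def by (auto intro: G.action_inv_cancel)

lemma src_actE: "g \<in> carrier G \<Longrightarrow> src K (actE \<alpha> g e) = actV \<alpha> g (src K e)"
  using action_wf by (simp add: action_wf_def)

lemma tgt_actE: "g \<in> carrier G \<Longrightarrow> tgt K (actE \<alpha> g e) = actV \<alpha> g (tgt K e)"
  using action_wf by (simp add: action_wf_def)

lemma actV_inv_mult:
  assumes "g \<in> carrier G" "h \<in> carrier G"
  shows "actV \<alpha> (inv\<^bsub>G\<^esub> (g \<otimes>\<^bsub>G\<^esub> h)) v = actV \<alpha> (inv\<^bsub>G\<^esub> h) (actV \<alpha> (inv\<^bsub>G\<^esub> g) v)"
  using assms by (simp add: G.inv_mult_group actV_mult)

lemma gauge_reindex_iff:
  assumes "g \<in> carrier G"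
  shows "gauge K (\<lambda>w. b (actV \<alpha> (inv\<^bsub>G\<^esub> g) w)) \<longleftrightarrow> (\<forall>v. b v \<in> StV K (actV \<alpha> g v))"
  unfolding gauge_def using actV_inv_cancel[OF assms] by metis

lemma gauge_transforms_reindex_iff:
  assumes g: "g \<in> carrier G"
  shows "gauge_transforms K (\<lambda>w. b (actV \<alpha> (inv\<^bsub>G\<^esub> g) w)) (act_sec G \<alpha> g u) u \<longleftrightarrow>
    (\<forall>e. u (actE \<alpha> g e) =
       b (tgt K e) \<otimes>\<^bsub>amb K\<^esub> actA \<alpha> g (u e) \<otimes>\<^bsub>amb K\<^esub> inv\<^bsub>amb K\<^esub> (b (src K e)))"
proof -
  have "gauge_transforms K (\<lambda>w. b (actV \<alpha> (inv\<^bsub>G\<^esub> g) w)) (act_sec G \<alpha> g u) u \<longleftrightarrow>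
    (\<forall>e. u (actE \<alpha> g e) = b (actV \<alpha> (inv\<^bsub>G\<^esub> g) (tgt K (actE \<alpha> g e)))
       \<otimes>\<^bsub>amb K\<^esub> actA \<alpha> g (u (actE \<alpha> (inv\<^bsub>G\<^esub> g) (actE \<alpha> g e)))
       \<otimes>\<^bsub>amb K\<^esub> inv\<^bsub>amb K\<^esub> (b (actV \<alpha> (inv\<^bsub>G\<^esub> g) (src K (actE \<alpha> g e)))))"
    unfolding gauge_transforms_def act_sec_def using actE_inv_cancel(1)[OF g] by metis
  then show ?thesis
    using g by (simp add: src_actE tgt_actE actV_inv_cancel actE_inv_cancel)
qed

lemma twisted_cocycle_reindex_iff:
  assumes g: "g \<in> carrier G" and h: "h \<in> carrier G"
  shows "(\<lambda>w. a (g \<otimes>\<^bsub>G\<^esub> h) (actV \<alpha> (inv\<^bsub>G\<^esub> (g \<otimes>\<^bsub>G\<^esub> h)) w)) =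
      gauge_comp K (\<lambda>w. a g (actV \<alpha> (inv\<^bsub>G\<^esub> g) w))
        (act_gauge G \<alpha> g (\<lambda>w. a h (actV \<alpha> (inv\<^bsub>G\<^esub> h) w))) \<longleftrightarrow>
    (\<forall>v. a (g \<otimes>\<^bsub>G\<^esub> h) v = a g (actV \<alpha> h v) \<otimes>\<^bsub>amb K\<^esub> actA \<alpha> g (a h v))"
  unfolding gauge_comp_def act_gauge_def fun_eq_iff actV_inv_mult[OF g h]
  using actV_inv_cancel[OF g] actV_inv_cancel[OF h] by metis

lemma gauge_intertwines_reindex_iff:
  assumes g: "g \<in> carrier G"
    and closed: "\<And>v. f v \<in> carrier (amb K)" "\<And>v. b v \<in> carrier (amb K)" "\<And>v. b' v \<in> carrier (amb K)"
  shows "gauge_comp K f (\<lambda>w. b (actV \<alpha> (inv\<^bsub>G\<^esub> g) w)) =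
      gauge_comp K (\<lambda>w. b' (actV \<alpha> (inv\<^bsub>G\<^esub> g) w)) (act_gauge G \<alpha> g f) \<longleftrightarrow>
    (\<forall>v. b' v = f (actV \<alpha> g v) \<otimes>\<^bsub>amb K\<^esub> b v \<otimes>\<^bsub>amb K\<^esub> inv\<^bsub>amb K\<^esub> (actA \<alpha> g (f v)))"
proof -
  have "b' v = f (actV \<alpha> g v) \<otimes>\<^bsub>amb K\<^esub> b v \<otimes>\<^bsub>amb K\<^esub> inv\<^bsub>amb K\<^esub> (actA \<alpha> g (f v)) \<longleftrightarrow>
      f (actV \<alpha> g v) \<otimes>\<^bsub>amb K\<^esub> b v = b' v \<otimes>\<^bsub>amb K\<^esub> actA \<alpha> g (f v)" for v
    using closed by (simp add: St.inv_solve_right actA_closed[OF g])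
  then show ?thesis
    unfolding gauge_comp_def act_gauge_def fun_eq_iff
    using actV_inv_cancel[OF g] by metis
qed

lemma twisted_cocycle_at_one:
  assumes mult: "\<forall>g \<in> carrier G. \<forall>h \<in> carrier G. \<forall>v.
      a (g \<otimes>\<^bsub>G\<^esub> h) v = a g (actV \<alpha> h v) \<otimes>\<^bsub>amb K\<^esub> actA \<alpha> g (a h v)"
    and closed: "a \<one>\<^bsub>G\<^esub> v \<in> carrier (amb K)"
  shows "a \<one>\<^bsub>G\<^esub> v = \<one>\<^bsub>amb K\<^esub>"
proof -
  have "a \<one>\<^bsub>G\<^esub> v = a \<one>\<^bsub>G\<^esub> v \<otimes>\<^bsub>amb K\<^esub> a \<one>\<^bsub>G\<^esub> v"
    using mult[rule_format, of "\<one>\<^bsub>G\<^esub>" "\<one>\<^bsub>G\<^esub>" v] closed by (simp add: actV_unit actA_unit)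
  then show ?thesis
    using closed by simp
qed

lemma eq_cocycle_iff_hfix_obj:
  assumes outside: "\<forall>g. g \<notin> carrier G \<longrightarrow> a g = (\<lambda>v. \<one>\<^bsub>amb K\<^esub>)"
  shows "eq_cocycle G K \<alpha> (u, a) \<longleftrightarrow> hfix_obj G K \<alpha> (hfix_of_cocycle G \<alpha> (u, a))"
proof -
  define \<phi> where "\<phi> g w = a g (actV \<alpha> (inv\<^bsub>G\<^esub> g) w)" for g w
  have gauges: "(\<forall>g \<in> carrier G. \<phi> g \<in> sec_hom K (act_sec G \<alpha> g u) u) \<longleftrightarrow>
      (\<forall>g \<in> carrier G. \<forall>v. a g v \<in> StV K (actV \<alpha> g v)) \<and>
      (\<forall>g \<in> carrier G. \<forall>e. u (actE \<alpha> g e) =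
         a g (tgt K e) \<otimes>\<^bsub>amb K\<^esub> actA \<alpha> g (u e) \<otimes>\<^bsub>amb K\<^esub> inv\<^bsub>amb K\<^esub> (a g (src K e)))"
    unfolding \<phi>_def sec_hom_def
    by (auto simp: gauge_reindex_iff gauge_transforms_reindex_iff)
  have mults: "(\<forall>g \<in> carrier G. \<forall>h \<in> carrier G.
        \<phi> (g \<otimes>\<^bsub>G\<^esub> h) = gauge_comp K (\<phi> g) (act_gauge G \<alpha> g (\<phi> h))) \<longleftrightarrow>
      (\<forall>g \<in> carrier G. \<forall>h \<in> carrier G. \<forall>v.
        a (g \<otimes>\<^bsub>G\<^esub> h) v = a g (actV \<alpha> h v) \<otimes>\<^bsub>amb K\<^esub> actA \<alpha> g (a h v))"
    unfolding \<phi>_def by (simp add: twisted_cocycle_reindex_iff)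
  have unit: "\<phi> \<one>\<^bsub>G\<^esub> = gauge_id K" if "eq_cocycle G K \<alpha> (u, a)"
  proof -
    have "a \<one>\<^bsub>G\<^esub> v \<in> carrier (amb K)" for v
      using that StV_carrier G.one_closed unfolding eq_cocycle_def by blast
    then show ?thesis
      using that twisted_cocycle_at_one[of a]
      by (simp add: \<phi>_def gauge_id_def eq_cocycle_def actV_unit fun_eq_iff)
  qed
  have "\<forall>g. g \<notin> carrier G \<longrightarrow> \<phi> g = gauge_id K"
    using outside by (simp add: \<phi>_def gauge_id_def fun_eq_iff)
  then show ?thesis
    using gauges mults unit outside
    unfolding hfix_of_cocycle_def eq_cocycle_def hfix_obj_def \<phi>_def[abs_def] by auto
qed

lemma hfix_of_cocycle_of_hfix:
  assumes "hfix_obj G K \<alpha> x\<phi>"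
  shows "hfix_of_cocycle G \<alpha> (cocycle_of_hfix \<alpha> x\<phi>) = x\<phi>"
proof -
  have "snd x\<phi> g (actV \<alpha> g (actV \<alpha> (inv\<^bsub>G\<^esub> g) v)) = snd x\<phi> g v" for g v
    using assms by (cases "g \<in> carrier G") (auto simp: actV_inv_cancel hfix_obj_def gauge_id_def)
  then show ?thesis
    by (simp add: hfix_of_cocycle_def cocycle_of_hfix_def)
qed

lemma cocycle_of_hfix_outside:
  assumes "hfix_obj G K \<alpha> x\<phi>" and "g \<notin> carrier G"
  shows "snd (cocycle_of_hfix \<alpha> x\<phi>) g = (\<lambda>v. \<one>\<^bsub>amb K\<^esub>)"
  using assms by (auto simp: cocycle_of_hfix_def hfix_obj_def gauge_id_def)

lemma eq_cocycle_hom_eq_hfix_hom: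
  assumes "eq_cocycle G K \<alpha> (u, a)" and "eq_cocycle G K \<alpha> (u', a')"
  shows "eq_cocycle_hom G K \<alpha> (u, a) (u', a') =
    hfix_hom G K \<alpha> (hfix_of_cocycle G \<alpha> (u, a)) (hfix_of_cocycle G \<alpha> (u', a'))"
proof -
  have closed: "a g v \<in> carrier (amb K)" "a' g v \<in> carrier (amb K)" if "g \<in> carrier G" for g v
    using assms that StV_carrier unfolding eq_cocycle_def by blast+
  have "(\<forall>g \<in> carrier G. \<forall>v. a' g v =
        f (actV \<alpha> g v) \<otimes>\<^bsub>amb K\<^esub> a g v \<otimes>\<^bsub>amb K\<^esub> inv\<^bsub>amb K\<^esub> (actA \<alpha> g (f v))) \<longleftrightarrow>
      (\<forall>g \<in> carrier G. gauge_comp K f (\<lambda>w. a g (actV \<alpha> (inv\<^bsub>G\<^esub> g) w)) =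
        gauge_comp K (\<lambda>w. a' g (actV \<alpha> (inv\<^bsub>G\<^esub> g) w)) (act_gauge G \<alpha> g f))"
    if "gauge K f" for f
  proof -
    have "f v \<in> carrier (amb K)" for v
      using that StV_carrier unfolding gauge_def by blast
    then show ?thesis
      using closed by (simp add: gauge_intertwines_reindex_iff)
  qed
  then show ?thesis
    unfolding eq_cocycle_hom_def hfix_hom_def sec_hom_def hfix_of_cocycle_def by auto
qed

lemma gauge_id_hfix_hom:
  assumes "hfix_obj G K \<alpha> x\<phi>"
  shows "gauge_id K \<in> hfix_hom G K \<alpha> x\<phi> x\<phi>"
proof -
  obtain x \<phi> where x\<phi>: "x\<phi> = (x, \<phi>)"
    by fastforce
  have "x e \<in> carrier (amb K)" and "g \<in> carrier G \<Longrightarrow> \<phi> g v \<in> carrier (amb K)" for e g v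
    using assms StE_carrier StV_carrier
    unfolding x\<phi> hfix_obj_def sk_cocycle_def sec_hom_def gauge_def by blast+
  then show ?thesis
    unfolding x\<phi>
    by (simp add: hfix_hom_def sec_hom_def gauge_def gauge_transforms_def gauge_comp_def
        act_gauge_def gauge_id_def one_StV actA_one)
qed

lemma hfix_obj_hfix_of_cocycle:
  assumes "eq_cocycle G K \<alpha> ua"
  shows "hfix_obj G K \<alpha> (hfix_of_cocycle G \<alpha> ua)"
proof (cases ua)
  case (Pair u a)
  then show ?thesis
    using assms eq_cocycle_iff_hfix_obj[of a u] by (simp add: eq_cocycle_def)
qed

lemma eq_cocycle_cocycle_of_hfix:
  assumes "hfix_obj G K \<alpha> x\<phi>"
  shows "eq_cocycle G K \<alpha> (cocycle_of_hfix \<alpha> x\<phi>)"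
proof -
  obtain u a where ua: "cocycle_of_hfix \<alpha> x\<phi> = (u, a)"
    by fastforce
  then have "\<forall>g. g \<notin> carrier G \<longrightarrow> a g = (\<lambda>v. \<one>\<^bsub>amb K\<^esub>)"
    using cocycle_of_hfix_outside[OF assms] by (metis snd_conv)
  then show ?thesis
    using eq_cocycle_iff_hfix_obj assms hfix_of_cocycle_of_hfix[OF assms] ua by metis
qed

end

theorem proposition9p8:
  fixes G :: "('g, 'c) monoid_scheme"
    and K :: "('v, 'e, 'a) stokes_skel"
    and \<alpha> :: "('g, 'v, 'e, 'a) skel_action"
  assumes "skel_wf K"
    and "action_wf G K \<alpha>"
  shows "cat_equivalent
           {ua. eq_cocycle G K \<alpha> ua} (eq_cocycle_hom G K \<alpha>) (gauge_comp K) (\<lambda>_. gauge_id K)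
           {x\<phi>. hfix_obj G K \<alpha> x\<phi>} (hfix_hom G K \<alpha>) (gauge_comp K) (\<lambda>_. gauge_id K)"
proof -
  interpret stokes_action G K \<alpha>
    using assms by unfold_locales
  show ?thesis
  proof (rule cat_equivalentI_identity_on_homs[where Fo = "hfix_of_cocycle G \<alpha>"])
    show "eq_cocycle_hom G K \<alpha> ua ua' = hfix_hom G K \<alpha> (hfix_of_cocycle G \<alpha> ua) (hfix_of_cocycle G \<alpha> ua')"
      if "ua \<in> {ua. eq_cocycle G K \<alpha> ua}" and "ua' \<in> {ua. eq_cocycle G K \<alpha> ua}" for ua ua'
      using that eq_cocycle_hom_eq_hfix_hom by (cases ua, cases ua') simp
    show "{x\<phi>. hfix_obj G K \<alpha> x\<phi>} \<subseteq> hfix_of_cocycle G \<alpha> ` {ua. eq_cocycle G K \<alpha> ua}"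
      using hfix_of_cocycle_of_hfix eq_cocycle_cocycle_of_hfix by (metis image_eqI mem_Collect_eq subsetI)
    show "gauge_comp K (gauge_id K) (gauge_id K) = gauge_id K"
      by (simp add: gauge_comp_def gauge_id_def)
  qed (simp_all add: hfix_obj_hfix_of_cocycle gauge_id_hfix_hom)
qed

end
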